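(* Let $f:\{0,1\}^n\to\{0,1\}$ and consider a memoryless quantum query algorithm that computes $f$ in $T$ queries, with intermediate states $|\psi_x^t\rangle$. If $x,y\in\{0,1\}^n$ satisfy $f(x)\neq f(y)$, then $$\sum_{t=0}^{T-1}\sqrt{\sum_{i:\,x_i\neq y_i}\big\|(|i\rangle\langle i|\otimes I)|\psi_x^t\rangle\big\|^2}\ \ge\ \frac16 .$$
   Context: Let $\mathcal H$ be the $2n$-dimensional Hilbert space with orthonormal basis $\{|i,b\rangle: i\in\{1,\dots,n\}, b\in\{0,1\}\}$ (index register $i$, value register $b$). For $x\in\{0,1\}^n$ the binary oracle is $O_x|i,b\rangle=|i,b\oplus x_i\rangle$. A memoryless quantum query algorithm with query complexity $T$ is a sequence $U_0,\dots,U_T$ of unitaries on $\mathcal H$; its intermediate state after $t$ queries on input $x$ is $|\psi_x^t\rangle=U_tO_x\cdots U_1O_xU_0|\mathrm{init}\rangle$ for a fixed basis state $|\mathrm{init}\rangle$. It outputs $b$ with probability $\|(I\otimes|b\rangle\langle b|)|\psi_x^T\rangle\|^2$, and computes $f$ if for every $x$ it outputs $f(x)$ with probability at least $2/3$. *)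

theory Defs
  imports Complex_Main
begin

(* Basis states |i,b> of the 2n-dimensional space are indexed by pairs (i,b) with
  i in {0..<n} (0-based index register) and b :: bool (value register, False = 0, True = 1). *)

type_synonym idx = "nat \<times> bool"
type_synonym vec = "idx \<Rightarrow> complex"
type_synonym qop = "idx \<Rightarrow> idx \<Rightarrow> complex"

definition dom_idx :: "nat \<Rightarrow> idx set" where
  "dom_idx n = {0..<n} \<times> UNIV"

definition mat_app :: "nat \<Rightarrow> qop \<Rightarrow> vec \<Rightarrow> vec" where
  "mat_app n U v = (\<lambda>j. if j \<in> dom_idx n then (\<Sum>k\<in>dom_idx n. U j k * v k) else 0)"

definition unitary_on :: "nat \<Rightarrow> qop \<Rightarrow> bool" where
  "unitary_on n U \<longleftrightarrow> (\<forall>j\<in>dom_idx n. \<forall>l\<in>dom_idx n.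
      (\<Sum>k\<in>dom_idx n. cnj (U k j) * U k l) = (if j = l then 1 else 0))"

definition query_op :: "nat \<Rightarrow> bool list \<Rightarrow> vec \<Rightarrow> vec" where
  "query_op n x v = (\<lambda>(i,b). if i < n then v (i, b \<noteq> x ! i) else 0)"

definition basis_vec :: "idx \<Rightarrow> vec" where
  "basis_vec j = (\<lambda>k. if k = j then 1 else 0)"

primrec psi :: "nat \<Rightarrow> (nat \<Rightarrow> qop) \<Rightarrow> idx \<Rightarrow> bool list \<Rightarrow> nat \<Rightarrow> vec" where
  "psi n U init x 0 = mat_app n (U 0) (basis_vec init)"
| "psi n U init x (Suc t) = mat_app n (U (Suc t)) (query_op n x (psi n U init x t))"

definition out_prob :: "nat \<Rightarrow> (nat \<Rightarrow> qop) \<Rightarrow> nat \<Rightarrow> idx \<Rightarrow> bool list \<Rightarrow> bool \<Rightarrow> real" where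
  "out_prob n U T init x b = (\<Sum>i<n. (cmod (psi n U init x T (i, b)))\<^sup>2)"

definition computes :: "nat \<Rightarrow> (bool list \<Rightarrow> bool) \<Rightarrow> (nat \<Rightarrow> qop) \<Rightarrow> nat \<Rightarrow> idx \<Rightarrow> bool" where
  "computes n f U T init \<longleftrightarrow>
     (\<forall>t\<le>T. unitary_on n (U t)) \<and> init \<in> dom_idx n \<and>
     (\<forall>x. length x = n \<longrightarrow> out_prob n U T init x (f x) \<ge> 2/3)"

end

theory Submission
  imports Defs "HOL-Analysis.L2_Norm"
begin

(* Hybrid argument. The queries O_x and O_y differ only on the basis states |i,b> with
  x_i \<noteq> y_i, so replacing O_x by O_y in step t moves the state by at most twice the
  norm of its component there; since all other operations are unitary these errors add
  up, and the final states on x and y are at distance at most twice the sum in question.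
  On the other hand, two unit vectors carrying weight at least 2/3 on complementary parts of
  the basis are at distance at least 1/3. *)

lemma L2_set_power2: "(L2_set f A)\<^sup>2 = (\<Sum>k\<in>A. (f k)\<^sup>2)"
  unfolding L2_set_def by (simp add: sum_nonneg)

lemma L2_set_norm_diff_triangle:
  fixes u v w :: "'a \<Rightarrow> 'b::real_normed_vector"
  shows "L2_set (\<lambda>k. norm (u k - w k)) A
    \<le> L2_set (\<lambda>k. norm (u k - v k)) A + L2_set (\<lambda>k. norm (v k - w k)) A"
proof -
  have "L2_set (\<lambda>k. norm (u k - w k)) A
      \<le> L2_set (\<lambda>k. norm (u k - v k) + norm (v k - w k)) A"
    by (rule L2_set_mono) (metis diff_add_cancel add_diff_eq norm_triangle_ineq, simp)
  also have "\<dots> \<le> L2_set (\<lambda>k. norm (u k - v k)) A + L2_set (\<lambda>k. norm (v k - w k)) A"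
    by (rule L2_set_triangle_ineq)
  finally show ?thesis .
qed

lemma L2_set_norm_diff_ge:
  fixes u v :: "'a \<Rightarrow> 'b::real_normed_vector"
  shows "L2_set (\<lambda>k. norm (u k)) A - L2_set (\<lambda>k. norm (v k)) A
    \<le> L2_set (\<lambda>k. norm (u k - v k)) A"
  using L2_set_norm_diff_triangle[of u "\<lambda>_. 0" A v] by simp

lemma L2_set_power2_split:
  assumes "finite I" "S \<subseteq> I"
  shows "(L2_set f I)\<^sup>2 = (L2_set f S)\<^sup>2 + (L2_set f (I - S))\<^sup>2"
  unfolding L2_set_power2 using sum.subset_diff[OF assms(2,1), of "\<lambda>k. (f k)\<^sup>2"] by simp

(* The constant is a lower bound for sqrt (2/3) - sqrt (1/3). *)
lemma L2_set_norm_diff_ge_of_weights: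
  fixes u v :: "'a \<Rightarrow> 'b::real_normed_vector"
  assumes "2/3 \<le> (L2_set (\<lambda>k. norm (u k)) A)\<^sup>2"
    and "(L2_set (\<lambda>k. norm (v k)) A)\<^sup>2 \<le> 1/3"
  shows "0.238 \<le> L2_set (\<lambda>k. norm (u k - v k)) A"
proof -
  have "(0.816::real)\<^sup>2 \<le> (L2_set (\<lambda>k. norm (u k)) A)\<^sup>2"
    using assms(1) by (simp add: power2_eq_square)
  then have "0.816 \<le> L2_set (\<lambda>k. norm (u k)) A"
    by (rule power2_le_imp_le) simp
  moreover have "(L2_set (\<lambda>k. norm (v k)) A)\<^sup>2 \<le> (0.578::real)\<^sup>2"
    using assms(2) by (simp add: power2_eq_square)
  then have "L2_set (\<lambda>k. norm (v k)) A \<le> 0.578"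
    by (rule power2_le_imp_le) simp
  ultimately show ?thesis
    using L2_set_norm_diff_ge[of u A v] by linarith
qed

lemma L2_set_norm_diff_ge_of_separated:
  fixes u v :: "'a \<Rightarrow> 'b::real_normed_vector"
  assumes "finite I" "S \<subseteq> I"
    and u_unit: "L2_set (\<lambda>k. norm (u k)) I = 1" and v_unit: "L2_set (\<lambda>k. norm (v k)) I = 1"
    and u_on_S: "2/3 \<le> (\<Sum>k\<in>S. (norm (u k))\<^sup>2)"
    and v_off_S: "2/3 \<le> (\<Sum>k\<in>I - S. (norm (v k))\<^sup>2)"
  shows "1/3 \<le> L2_set (\<lambda>k. norm (u k - v k)) I"
proof -
  note split = L2_set_power2_split[OF assms(1,2)]
  have u_weights: "2/3 \<le> (L2_set (\<lambda>k. norm (u k)) S)\<^sup>2"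
    "(L2_set (\<lambda>k. norm (u k)) (I - S))\<^sup>2 \<le> 1/3"
    using u_on_S split[of "\<lambda>k. norm (u k)"] u_unit by (simp_all add: L2_set_power2)
  have v_weights: "2/3 \<le> (L2_set (\<lambda>k. norm (v k)) (I - S))\<^sup>2"
    "(L2_set (\<lambda>k. norm (v k)) S)\<^sup>2 \<le> 1/3"
    using v_off_S split[of "\<lambda>k. norm (v k)"] v_unit by (simp_all add: L2_set_power2)
  have "0.238 \<le> L2_set (\<lambda>k. norm (u k - v k)) S"
    using L2_set_norm_diff_ge_of_weights u_weights(1) v_weights(2) by blast
  moreover have "0.238 \<le> L2_set (\<lambda>k. norm (u k - v k)) (I - S)"
    using L2_set_norm_diff_ge_of_weights[OF v_weights(1) u_weights(2)]
    by (simp add: norm_minus_commute)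
  ultimately have "(0.238::real)\<^sup>2 + 0.238\<^sup>2 \<le> (L2_set (\<lambda>k. norm (u k - v k)) I)\<^sup>2"
    unfolding split by (intro add_mono power_mono) simp_all
  then have "(1/3::real)\<^sup>2 \<le> (L2_set (\<lambda>k. norm (u k - v k)) I)\<^sup>2"
    by (simp add: power2_eq_square)
  then show ?thesis
    by (rule power2_le_imp_le) simp
qed

abbreviation vec_norm :: "nat \<Rightarrow> vec \<Rightarrow> real" where
  "vec_norm n v \<equiv> L2_set (\<lambda>k. cmod (v k)) (dom_idx n)"

lemma finite_dom_idx [simp]: "finite (dom_idx n)"
  by (simp add: dom_idx_def)

lemma sum_dom_idx: "(\<Sum>k\<in>dom_idx n. g k) = (\<Sum>i<n. \<Sum>b\<in>UNIV. g (i, b))"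
  unfolding dom_idx_def sum.cartesian_product by (simp add: lessThan_atLeast0)

lemma sum_dom_idx_slice:
  "(\<Sum>k\<in>dom_idx n \<inter> {k. snd k = b}. g k) = (\<Sum>i<n. g (i, b))"
proof -
  have "dom_idx n \<inter> {k. snd k = b} = (\<lambda>i. (i, b)) ` {..<n}"
    by (auto simp: dom_idx_def)
  then show ?thesis
    by (simp add: sum.reindex inj_on_def)
qed

lemma complex_of_real_cmod_power2: "complex_of_real ((cmod z)\<^sup>2) = cnj z * z"
  by (metis complex_norm_square mult.commute of_real_power)

lemma unitary_on_sum_cmod_power2:
  assumes "unitary_on n U"
  shows "(\<Sum>j\<in>dom_idx n. (cmod (mat_app n U v j))\<^sup>2) = (\<Sum>k\<in>dom_idx n. (cmod (v k))\<^sup>2)"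
proof -
  let ?D = "dom_idx n"
  have "complex_of_real (\<Sum>j\<in>?D. (cmod (mat_app n U v j))\<^sup>2) =
      (\<Sum>j\<in>?D. cnj (\<Sum>k\<in>?D. U j k * v k) * (\<Sum>l\<in>?D. U j l * v l))"
    unfolding mat_app_def of_real_sum
    by (rule sum.cong) (auto simp only: complex_of_real_cmod_power2 if_True)
  also have "\<dots> = (\<Sum>j\<in>?D. \<Sum>k\<in>?D. \<Sum>l\<in>?D. cnj (v k) * v l * (cnj (U j k) * U j l))"
    unfolding cnj_sum sum_product by (simp only: complex_cnj_mult mult_ac)
  also have "\<dots> = (\<Sum>k\<in>?D. \<Sum>j\<in>?D. \<Sum>l\<in>?D. cnj (v k) * v l * (cnj (U j k) * U j l))"
    by (rule sum.swap)
  also have "\<dots> = (\<Sum>k\<in>?D. \<Sum>l\<in>?D. \<Sum>j\<in>?D. cnj (v k) * v l * (cnj (U j k) * U j l))"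
    by (rule sum.cong[OF refl], rule sum.swap)
  also have "\<dots> = (\<Sum>k\<in>?D. \<Sum>l\<in>?D. cnj (v k) * v l * (\<Sum>j\<in>?D. cnj (U j k) * U j l))"
    by (simp only: sum_distrib_left)
  also have "\<dots> = (\<Sum>k\<in>?D. \<Sum>l\<in>?D. if k = l then cnj (v k) * v l else 0)"
    using assms unfolding unitary_on_def by (intro sum.cong refl) auto
  also have "\<dots> = (\<Sum>k\<in>?D. cnj (v k) * v k)"
    by (simp add: sum.delta)
  also have "\<dots> = complex_of_real (\<Sum>k\<in>?D. (cmod (v k))\<^sup>2)"
    by (simp only: of_real_sum complex_of_real_cmod_power2)
  finally show ?thesis
    using of_real_eq_iff by blast
qed

lemma vec_norm_mat_app_unitary: "unitary_on n U \<Longrightarrow> vec_norm n (mat_app n U v) = vec_norm n v"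
  unfolding L2_set_def by (simp add: unitary_on_sum_cmod_power2)

lemma vec_norm_query_op: "vec_norm n (query_op n x v) = vec_norm n v"
  unfolding L2_set_def sum_dom_idx
proof (rule arg_cong[where f = sqrt], rule sum.cong[OF refl])
  fix i assume "i \<in> {..<n}"
  then show "(\<Sum>b\<in>UNIV. (cmod (query_op n x v (i, b)))\<^sup>2) = (\<Sum>b\<in>UNIV. (cmod (v (i, b)))\<^sup>2)"
    by (cases "x ! i") (simp_all add: query_op_def UNIV_bool add.commute)
qed

lemma mat_app_diff: "mat_app n U (\<lambda>k. v k - w k) = (\<lambda>j. mat_app n U v j - mat_app n U w j)"
  unfolding mat_app_def by (auto simp: sum_subtractf right_diff_distrib)

lemma query_op_diff: "query_op n x (\<lambda>k. v k - w k) = (\<lambda>k. query_op n x v k - query_op n x w k)"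
  unfolding query_op_def by auto

definition mass_on_diff :: "nat \<Rightarrow> bool list \<Rightarrow> bool list \<Rightarrow> vec \<Rightarrow> real" where
  "mass_on_diff n x y v =
     (\<Sum>i\<in>{i. i < n \<and> x ! i \<noteq> y ! i}. \<Sum>b\<in>UNIV. (cmod (v (i, b)))\<^sup>2)"

lemma norm_diff_power2_le:
  fixes a b :: "'a::real_normed_vector"
  shows "(norm (a - b))\<^sup>2 \<le> 2 * ((norm a)\<^sup>2 + (norm b)\<^sup>2)"
proof -
  have "(norm (a - b))\<^sup>2 \<le> (norm a + norm b)\<^sup>2"
    by (simp add: power_mono norm_triangle_ineq4)
  also have "\<dots> \<le> 2 * ((norm a)\<^sup>2 + (norm b)\<^sup>2)"
    using zero_le_power2[of "norm a - norm b"] by (simp add: power2_eq_square algebra_simps)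
  finally show ?thesis .
qed

lemma vec_norm_query_op_diff:
  "vec_norm n (\<lambda>k. query_op n x v k - query_op n y v k) \<le> 2 * sqrt (mass_on_diff n x y v)"
proof -
  let ?mass = "\<lambda>i. \<Sum>b\<in>UNIV. (cmod (v (i, b)))\<^sup>2"
  have "(\<Sum>b\<in>UNIV. (cmod (query_op n x v (i, b) - query_op n y v (i, b)))\<^sup>2)
      \<le> (if x ! i \<noteq> y ! i then 4 * ?mass i else 0)" if "i < n" for i
    using that norm_diff_power2_le[of "v (i, True)" "v (i, False)"]
      norm_diff_power2_le[of "v (i, False)" "v (i, True)"]
    by (cases "x ! i"; cases "y ! i") (simp_all add: query_op_def UNIV_bool)
  then have "(vec_norm n (\<lambda>k. query_op n x v k - query_op n y v k))\<^sup>2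
      \<le> (\<Sum>i<n. if x ! i \<noteq> y ! i then 4 * ?mass i else 0)"
    unfolding L2_set_power2 sum_dom_idx by (intro sum_mono) simp
  also have "\<dots> = (2 * sqrt (mass_on_diff n x y v))\<^sup>2"
    unfolding mass_on_diff_def power_mult_distrib
    by (simp add: sum_nonneg sum.inter_filter[symmetric] sum_distrib_left Collect_conj_eq
        lessThan_def Int_commute)
  finally show ?thesis
    by (rule power2_le_imp_le) (simp add: mass_on_diff_def sum_nonneg)
qed

lemma vec_norm_basis_vec: "j \<in> dom_idx n \<Longrightarrow> vec_norm n (basis_vec j) = 1"
  unfolding L2_set_def basis_vec_def
  by (simp add: sum.delta if_distrib[of "\<lambda>z. (cmod z)\<^sup>2"] cong: if_cong)

lemma vec_norm_psi:
  assumes "\<And>s. s \<le> t \<Longrightarrow> unitary_on n (U s)" and "init \<in> dom_idx n"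
  shows "vec_norm n (psi n U init x t) = 1"
  using assms
  by (induction t) (simp_all add: vec_norm_mat_app_unitary vec_norm_query_op vec_norm_basis_vec)

lemma vec_norm_psi_diff_le:
  assumes "\<And>s. s \<le> t \<Longrightarrow> unitary_on n (U s)"
  shows "vec_norm n (\<lambda>k. psi n U init x t k - psi n U init y t k)
     \<le> 2 * (\<Sum>s<t. sqrt (mass_on_diff n x y (psi n U init x s)))"
  using assms
proof (induction t)
  case 0
  then show ?case
    by (simp add: L2_set_def)
next
  case (Suc t)
  let ?a = "psi n U init x t" and ?b = "psi n U init y t"
  have "vec_norm n (\<lambda>k. psi n U init x (Suc t) k - psi n U init y (Suc t) k)
      = vec_norm n (mat_app n (U (Suc t)) (\<lambda>k. query_op n x ?a k - query_op n y ?b k))"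
    by (simp add: mat_app_diff)
  also have "\<dots> = vec_norm n (\<lambda>k. query_op n x ?a k - query_op n y ?b k)"
    by (rule vec_norm_mat_app_unitary) (simp add: Suc.prems)
  also have "\<dots> \<le> vec_norm n (\<lambda>k. query_op n x ?a k - query_op n y ?a k)
      + vec_norm n (\<lambda>k. query_op n y ?a k - query_op n y ?b k)"
    by (rule L2_set_norm_diff_triangle)
  also have "vec_norm n (\<lambda>k. query_op n y ?a k - query_op n y ?b k) = vec_norm n (\<lambda>k. ?a k - ?b k)"
    using vec_norm_query_op[of n y "\<lambda>k. ?a k - ?b k"] by (simp add: query_op_diff)
  finally show ?case
    using vec_norm_query_op_diff[of n x ?a y] Suc by simp
qed

theorem corollary2p2:
  fixes n T :: nat and f :: "bool list \<Rightarrow> bool" and U :: "nat \<Rightarrow> qop" and init :: idx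
    and x y :: "bool list"
  assumes "computes n f U T init"
    and "length x = n" and "length y = n"
    and "f x \<noteq> f y"
  shows "(\<Sum>t<T. sqrt (\<Sum>i\<in>{i. i < n \<and> x ! i \<noteq> y ! i}.
            \<Sum>b\<in>UNIV. (cmod (psi n U init x t (i, b)))\<^sup>2)) \<ge> 1/6"
proof -
  let ?S = "dom_idx n \<inter> {k. snd k = f x}"
  have unitary: "\<And>t. t \<le> T \<Longrightarrow> unitary_on n (U t)" and "init \<in> dom_idx n"
    using assms(1) by (simp_all add: computes_def)
  have correct: "2/3 \<le> (\<Sum>k\<in>dom_idx n \<inter> {k. snd k = f z}. (cmod (psi n U init z T k))\<^sup>2)"
    if "length z = n" for z
    using assms(1) that by (simp add: computes_def out_prob_def sum_dom_idx_slice)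
  have "dom_idx n - ?S = dom_idx n \<inter> {k. snd k = f y}"
    using assms(4) by auto
  then have "1/3 \<le> vec_norm n (\<lambda>k. psi n U init x T k - psi n U init y T k)"
    using correct[OF assms(2)] correct[OF assms(3)]
      vec_norm_psi[where t = T, OF unitary \<open>init \<in> dom_idx n\<close>]
    by (intro L2_set_norm_diff_ge_of_separated) auto
  also have "\<dots> \<le> 2 * (\<Sum>t<T. sqrt (mass_on_diff n x y (psi n U init x t)))"
    by (rule vec_norm_psi_diff_le[where t = T, OF unitary])
  finally show ?thesis
    unfolding mass_on_diff_def by simp
qed

end
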